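(* Let $\mathcal C$ be an $(n,k,r,3)$-SLRC, let $G=([n],\mathcal E)$ be a minimal repair graph of $\mathcal C$, and let $B$, $C_1$ and $\mathcal E_{\mathrm{blue}}$ be as defined in the context. Then $$|\mathcal E_{\mathrm{blue}}|\ge\frac{|B|+|C_1|}{r}.$$
   Context: For an $[n,k]$ linear code $\mathcal C$ over a finite field $\mathbb F$, a recovering set of $i\in[n]$ is a set $R\subseteq[n]\setminus\{i\}$ with nonzero $a_j\in\mathbb F$ such that $x_i=\sum_{j\in R}a_jx_j$ for all $x\in\mathcal C$; standing assumption: recovering sets have size $2\le|R|\le r<k$. $\mathcal C$ is an $(n,k,r,t)$-SLRC if every $E\subseteq[n]$ with $|E|\le t$ can be indexed $\{i_1,\dots,i_{|E|}\}$ so that each $i_\ell$ has a recovering set $R_\ell\subseteq([n]\setminus E)\cup\{i_1,\dots,i_{\ell-1}\}$. A repair graph of $\mathcal C$ is a directed acyclic graph on vertex set $[n]$ such that for every vertex $i$ with nonempty in-neighbourhood $\mathrm{In}(i)$, $\mathrm{In}(i)$ is a recovering set of $i$. A source is a vertex with no in-neighbours; $S(G)$ is the set of sources. A minimal repair graph is a repair graph with the minimum number of sources among all repair graphs of $\mathcal C$. $\mathrm{Out}(v)$ is the set of out-neighbours of $v$ and $\mathrm{Out}^2(v)=\bigcup_{u\in\mathrm{Out}(v)}\mathrm{Out}(u)\setminus\mathrm{Out}(v)$. Define $B=\{v\in S(G):|\mathrm{Out}(v)|=2\}$, $C_1=\{v\in S(G):|\mathrm{Out}(v)|=1,\ |\mathrm{Out}^2(v)|=1\}$,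 $C_2=\{v\in S(G):|\mathrm{Out}(v)|=1,\ |\mathrm{Out}^2(v)|\ge2\}$. An edge is green if its tail is the unique out-neighbour of some source in $C_1\cup C_2$. For $v\in B\cup C_1$, a non-green edge $e$ is a blue edge belonging to $v$ if either $v\in B$ and the tail of $e$ lies in $\mathrm{Out}(v)$, or $v\in C_1$ and the tail of $e$ lies in $\mathrm{Out}^2(v)$. $\mathcal E_{\mathrm{blue}}$ is the set of all edges that are blue edges belonging to some $v\in B\cup C_1$. *)

theory Defs
  imports "HOL-Analysis.Analysis"
begin

text \<open>Coordinates [n] are modelled by a finite type 'n (n = CARD('n)); codewords are
  vectors in 'f^'n for a field 'f. A code is a linear subspace of 'f^'n.\<close>

definition recovering_set :: "('f::field ^ 'n::finite) set \<Rightarrow> nat \<Rightarrow> 'n \<Rightarrow> 'n set \<Rightarrow> bool" where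
  "recovering_set C r i R \<longleftrightarrow>
     R \<subseteq> UNIV - {i} \<and> 2 \<le> card R \<and> card R \<le> r \<and>
     (\<exists>a :: 'n \<Rightarrow> 'f. (\<forall>j\<in>R. a j \<noteq> 0) \<and> (\<forall>x\<in>C. x $ i = (\<Sum>j\<in>R. a j * x $ j)))"

definition linear_code :: "('f::field ^ 'n::finite) set \<Rightarrow> nat \<Rightarrow> bool" where
  "linear_code C k \<longleftrightarrow> vec.subspace C \<and> vec.dim C = k"

definition is_SLRC :: "('f::field ^ 'n::finite) set \<Rightarrow> nat \<Rightarrow> nat \<Rightarrow> nat \<Rightarrow> bool" where
  "is_SLRC C k r t \<longleftrightarrow> linear_code C k \<and> r < k \<and>
     (\<forall>E :: 'n set. card E \<le> t \<longrightarrow>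
        (\<exists>es. distinct es \<and> set es = E \<and>
           (\<forall>l < length es. \<exists>R. recovering_set C r (es ! l) R \<and>
                R \<subseteq> (UNIV - E) \<union> set (take l es))))"

definition In_nb :: "('n \<times> 'n) set \<Rightarrow> 'n \<Rightarrow> 'n set" where
  "In_nb G i = {j. (j, i) \<in> G}"

definition Out_nb :: "('n \<times> 'n) set \<Rightarrow> 'n \<Rightarrow> 'n set" where
  "Out_nb G v = {u. (v, u) \<in> G}"

definition Out2_nb :: "('n \<times> 'n) set \<Rightarrow> 'n \<Rightarrow> 'n set" where
  "Out2_nb G v = (\<Union>u\<in>Out_nb G v. Out_nb G u) - Out_nb G v"

definition is_repair_graph :: "('f::field ^ 'n::finite) set \<Rightarrow> nat \<Rightarrow> ('n \<times> 'n) set \<Rightarrow> bool" where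
  "is_repair_graph C r G \<longleftrightarrow> acyclic G \<and>
     (\<forall>i. In_nb G i \<noteq> {} \<longrightarrow> recovering_set C r i (In_nb G i))"

definition sources :: "('n \<times> 'n) set \<Rightarrow> 'n set" where
  "sources G = {v. In_nb G v = {}}"

definition is_minimal_repair_graph :: "('f::field ^ 'n::finite) set \<Rightarrow> nat \<Rightarrow> ('n \<times> 'n) set \<Rightarrow> bool" where
  "is_minimal_repair_graph C r G \<longleftrightarrow> is_repair_graph C r G \<and>
     (\<forall>G'. is_repair_graph C r G' \<longrightarrow> card (sources G) \<le> card (sources G'))"

definition B_set :: "('n \<times> 'n) set \<Rightarrow> 'n set" where
  "B_set G = {v \<in> sources G. card (Out_nb G v) = 2}"

definition C1_set :: "('n \<times> 'n) set \<Rightarrow> 'n set" where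
  "C1_set G = {v \<in> sources G. card (Out_nb G v) = 1 \<and> card (Out2_nb G v) = 1}"

definition C2_set :: "('n \<times> 'n) set \<Rightarrow> 'n set" where
  "C2_set G = {v \<in> sources G. card (Out_nb G v) = 1 \<and> card (Out2_nb G v) \<ge> 2}"

definition green_edge :: "('n \<times> 'n) set \<Rightarrow> 'n \<times> 'n \<Rightarrow> bool" where
  "green_edge G e \<longleftrightarrow> e \<in> G \<and> (\<exists>v \<in> C1_set G \<union> C2_set G. Out_nb G v = {fst e})"

definition blue_edge_of :: "('n \<times> 'n) set \<Rightarrow> 'n \<Rightarrow> 'n \<times> 'n \<Rightarrow> bool" where
  "blue_edge_of G v e \<longleftrightarrow> e \<in> G \<and> \<not> green_edge G e \<and>
     ((v \<in> B_set G \<and> fst e \<in> Out_nb G v) \<or> (v \<in> C1_set G \<and> fst e \<in> Out2_nb G v))"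

definition blue_edges :: "('n \<times> 'n) set \<Rightarrow> ('n \<times> 'n) set" where
  "blue_edges G = {e. \<exists>v \<in> B_set G \<union> C1_set G. blue_edge_of G v e}"

end

theory Submission
  imports Defs
begin

text \<open>Every vertex of \<open>B \<union> C\<^sub>1\<close> owns a blue edge. Otherwise the vertex together with its
  out-neighbourhood (and, for \<open>C\<^sub>1\<close>, its second out-neighbourhood) is a set of at most three
  vertices whose edges leaving it all start at green tails, i.e. at unique out-neighbours of
  sources. Exchanging these sources with their out-neighbours keeps the repair graph minimal and
  turns the set into one closed under out-neighbours that still contains a source; repairing a
  closed set in the order given by the 3-SLRC property removes that source, contradicting
  minimality. Conversely, the owners of a blue edge with tail \<open>u\<close> map injectively into
  \<open>In u\<close> (a \<open>B\<close>-vertex to itself, a \<open>C\<^sub>1\<close>-vertex to its out-neighbour, using the same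
  argument to separate two such sources), so an edge has at most \<open>r\<close> owners. Double counting
  gives the bound.\<close>

lemma acyclic_by_rank:
  fixes f :: "'a \<Rightarrow> nat"
  assumes "\<And>x y. (x, y) \<in> R \<Longrightarrow> f x < f y"
  shows "acyclic R"
  using assms by (intro acyclic_subset[OF wf_acyclic[OF wf_measure]]) auto

definition num_ancestors :: "('n::finite \<times> 'n) set \<Rightarrow> 'n \<Rightarrow> nat" where
  "num_ancestors G y = card {x. (x, y) \<in> G\<^sup>+}"

lemma num_ancestors_less:
  assumes "acyclic G" and "(x, y) \<in> G"
  shows "num_ancestors G x < num_ancestors G y"
proof -
  have "{z. (z, x) \<in> G\<^sup>+} \<subset> {z. (z, y) \<in> G\<^sup>+}"
    using assms unfolding acyclic_def by (auto intro: trancl_into_trancl)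
  then show ?thesis unfolding num_ancestors_def by (intro psubset_card_mono) auto
qed

lemma num_ancestors_le_card:
  fixes G :: "('n::finite \<times> 'n) set"
  shows "num_ancestors G y \<le> CARD('n)"
  unfolding num_ancestors_def by (rule card_mono) auto

lemma In_nb_iff_Out_nb: "x \<in> In_nb G y \<longleftrightarrow> y \<in> Out_nb G x"
  unfolding In_nb_def Out_nb_def by simp

lemma sources_iff: "v \<in> sources G \<longleftrightarrow> (\<forall>x. (x, v) \<notin> G)"
  unfolding sources_def In_nb_def by auto

lemma head_not_source: "(x, y) \<in> G \<Longrightarrow> y \<notin> sources G"
  unfolding sources_iff by auto

lemma recovering_set_nonempty: "recovering_set C r i R \<Longrightarrow> R \<noteq> {}"
  unfolding recovering_set_def by auto

lemma is_repair_graph_acyclic: "is_repair_graph C r G \<Longrightarrow> acyclic G"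
  unfolding is_repair_graph_def by simp

lemma is_minimal_repair_graph_repair: "is_minimal_repair_graph C r G \<Longrightarrow> is_repair_graph C r G"
  unfolding is_minimal_repair_graph_def by simp

text \<open>Solving the repair equation of \<open>w\<close> for a coordinate \<open>s\<close> of its recovering set.\<close>

lemma recovering_set_exchange:
  fixes C :: "('f::field ^ 'n::finite) set"
  assumes rec: "recovering_set C r w R" and "s \<in> R"
  shows "recovering_set C r s (insert w (R - {s}))"
proof -
  obtain a :: "'n \<Rightarrow> 'f" where a0: "\<forall>j\<in>R. a j \<noteq> 0"
    and aeq: "\<forall>x\<in>C. x $ w = (\<Sum>j\<in>R. a j * x $ j)"
    using rec unfolding recovering_set_def by blast
  have R: "R \<subseteq> UNIV - {w}" "2 \<le> card R" "card R \<le> r"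
    using rec unfolding recovering_set_def by auto
  have "w \<notin> R - {s}" using R by auto
  have card: "card (insert w (R - {s})) = card R"
    using \<open>w \<notin> R - {s}\<close> \<open>s \<in> R\<close> R(2) by (simp add: card_Diff_singleton)
  have as: "a s \<noteq> 0" using a0 \<open>s \<in> R\<close> by auto
  define b where "b j = (if j = w then inverse (a s) else - a j / a s)" for j
  have b0: "\<forall>j\<in>insert w (R - {s}). b j \<noteq> 0"
    using a0 as unfolding b_def by auto
  have beq: "x $ s = (\<Sum>j\<in>insert w (R - {s}). b j * x $ j)" if "x \<in> C" for x
  proof -
    have "x $ w = a s * x $ s + (\<Sum>j\<in>R - {s}. a j * x $ j)"
      using aeq that \<open>s \<in> R\<close> by (simp add: sum.remove)
    moreover have "(\<Sum>j\<in>R - {s}. b j * x $ j) = (\<Sum>j\<in>R - {s}. - (a j * x $ j) / a s)"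
      using \<open>w \<notin> R - {s}\<close> by (intro sum.cong) (auto simp: b_def)
    moreover have "\<dots> = - (\<Sum>j\<in>R - {s}. a j * x $ j) / a s"
      by (simp add: sum_divide_distrib sum_negf)
    ultimately show ?thesis
      using as \<open>w \<notin> R - {s}\<close> by (simp add: b_def field_simps)
  qed
  show ?thesis unfolding recovering_set_def
    using R \<open>s \<in> R\<close> card b0 beq by (auto intro!: exI[of _ b])
qed

definition reroute :: "('n \<times> 'n) set \<Rightarrow> 'n set \<Rightarrow> ('n \<Rightarrow> 'n set) \<Rightarrow> ('n \<times> 'n) set" where
  "reroute G E R = {e \<in> G. snd e \<notin> E} \<union> {(j, y). y \<in> E \<and> j \<in> R y}"

lemma In_nb_reroute: "In_nb (reroute G E R) y = (if y \<in> E then R y else In_nb G y)"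
  unfolding reroute_def In_nb_def by auto

lemma Out_nb_reroute: "Out_nb (reroute G E R) x = (Out_nb G x - E) \<union> {y \<in> E. x \<in> R y}"
  unfolding reroute_def Out_nb_def by auto

lemma sources_reroute: "sources (reroute G E R) = (sources G - E) \<union> {y \<in> E. R y = {}}"
  unfolding sources_def In_nb_reroute by auto

lemma is_repair_graph_reroute:
  assumes "is_repair_graph C r G" and "acyclic (reroute G E R)"
    and "\<And>y. y \<in> E \<Longrightarrow> R y \<noteq> {} \<Longrightarrow> recovering_set C r y (R y)"
  shows "is_repair_graph C r (reroute G E R)"
  using assms unfolding is_repair_graph_def In_nb_reroute by auto

lemma acyclic_reroute_closed:
  fixes G :: "('n::finite \<times> 'n) set" and \<rho> :: "'n \<Rightarrow> nat"
  assumes "acyclic G" and "\<forall>p\<in>E. Out_nb G p \<subseteq> E"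
    and "\<And>x y. y \<in> E \<Longrightarrow> x \<in> R y \<Longrightarrow> x \<in> E \<Longrightarrow> \<rho> x < \<rho> y"
  shows "acyclic (reroute G E R)"
proof (rule acyclic_by_rank)
  fix x y assume e: "(x, y) \<in> reroute G E R"
  let ?f = "\<lambda>y. if y \<in> E then Suc (CARD('n)) + \<rho> y else num_ancestors G y"
  show "?f x < ?f y"
  proof (cases "y \<in> E")
    case True
    then show ?thesis
      using e assms(3) num_ancestors_le_card[of G x] unfolding reroute_def by auto
  next
    case False
    then have "(x, y) \<in> G" and "x \<notin> E"
      using e assms(2) unfolding reroute_def Out_nb_def by auto
    then show ?thesis using False num_ancestors_less[OF assms(1)] by simp
  qed
qed

lemma SLRC_recovery_order:
  fixes C :: "('f::field ^ 'n::finite) set"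
  assumes "is_SLRC C k r t" and "card E \<le> t"
  obtains R and \<rho> :: "'n \<Rightarrow> nat"
  where "\<And>y. y \<in> E \<Longrightarrow> recovering_set C r y (R y)"
    and "\<And>x y. y \<in> E \<Longrightarrow> x \<in> R y \<Longrightarrow> x \<in> E \<Longrightarrow> \<rho> x < \<rho> y"
proof -
  obtain es where "distinct es" and set_es: "set es = E"
    and "\<forall>l < length es. \<exists>R. recovering_set C r (es ! l) R \<and> R \<subseteq> (UNIV - E) \<union> set (take l es)"
    using assms unfolding is_SLRC_def by blast
  then obtain Rf where Rf: "\<And>l. l < length es \<Longrightarrow>
      recovering_set C r (es ! l) (Rf l) \<and> Rf l \<subseteq> (UNIV - E) \<union> set (take l es)"
    by metis
  define \<rho> where "\<rho> = inv_into {..<length es} ((!) es)"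
  have inj: "inj_on ((!) es) {..<length es}"
    using \<open>distinct es\<close> by (simp add: inj_on_nth)
  have \<rho>_nth: "\<rho> (es ! l) = l" if "l < length es" for l
    using inv_into_f_f[OF inj] that unfolding \<rho>_def by simp
  have \<rho>_less: "\<rho> y < length es" and nth_\<rho>: "es ! \<rho> y = y" if yE: "y \<in> E" for y
  proof -
    obtain l where "l < length es" "y = es ! l"
      using yE set_es by (auto simp: in_set_conv_nth)
    then show "\<rho> y < length es" "es ! \<rho> y = y" using \<rho>_nth by simp_all
  qed
  show thesis
  proof (rule that[of "\<lambda>y. Rf (\<rho> y)" \<rho>])
    show "recovering_set C r y (Rf (\<rho> y))" if "y \<in> E" for y
      using Rf[OF \<rho>_less[OF that]] nth_\<rho>[OF that] by simp
    show "\<rho> x < \<rho> y" if "y \<in> E" "x \<in> Rf (\<rho> y)" "x \<in> E" for x y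
    proof -
      have "x \<in> set (take (\<rho> y) es)" using Rf[OF \<rho>_less[OF that(1)]] that by auto
      then obtain m where "m < \<rho> y" "x = es ! m" by (auto simp: in_set_conv_nth)
      then show ?thesis using \<rho>_nth \<rho>_less[OF that(1)] by simp
    qed
  qed
qed

text \<open>If a small set closed under out-neighbours contained a source, repairing it by the
  SLRC order would give a repair graph with fewer sources.\<close>

lemma small_closed_set_contains_no_source:
  fixes C :: "('f::field ^ 'n::finite) set"
  assumes "is_SLRC C k r t" and m: "is_minimal_repair_graph C r G"
    and "card E \<le> t" and closed: "\<forall>p\<in>E. Out_nb G p \<subseteq> E" and "v \<in> E"
  shows "v \<notin> sources G"
proof
  assume "v \<in> sources G"
  obtain R and \<rho> :: "'n \<Rightarrow> nat" where rec: "\<And>y. y \<in> E \<Longrightarrow> recovering_set C r y (R y)"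
    and order: "\<And>x y. y \<in> E \<Longrightarrow> x \<in> R y \<Longrightarrow> x \<in> E \<Longrightarrow> \<rho> x < \<rho> y"
    using SLRC_recovery_order[OF assms(1,3)] by metis
  have rep: "is_repair_graph C r G" using m by (rule is_minimal_repair_graph_repair)
  have "is_repair_graph C r (reroute G E R)"
    using rep acyclic_reroute_closed[OF is_repair_graph_acyclic[OF rep] closed order] rec
    by (intro is_repair_graph_reroute) auto
  then have "card (sources G) \<le> card (sources (reroute G E R))"
    using m unfolding is_minimal_repair_graph_def by blast
  moreover have "sources (reroute G E R) = sources G - E"
    using rec recovering_set_nonempty unfolding sources_reroute by blast
  moreover have "card (sources G - E) < card (sources G)"
    using \<open>v \<in> sources G\<close> \<open>v \<in> E\<close> by (intro psubset_card_mono) auto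
  ultimately show False by simp
qed

text \<open>Exchanging a source \<open>s\<close> with its only out-neighbour \<open>w\<close>: \<open>w\<close> becomes a source and
  \<open>s\<close> is repaired from the rest of the recovering set of \<open>w\<close>.\<close>

definition swap_source :: "('n \<times> 'n) set \<Rightarrow> 'n \<Rightarrow> 'n \<Rightarrow> ('n \<times> 'n) set" where
  "swap_source G s w = reroute G {s, w} (\<lambda>y. if y = s then insert w (In_nb G w - {s}) else {})"

context
  fixes G :: "('n::finite \<times> 'n) set" and s w :: 'n
  assumes s: "s \<in> sources G" and out_s: "Out_nb G s = {w}"
begin

lemma swap_source_edge: "(s, w) \<in> G"
  using out_s unfolding Out_nb_def by auto

lemma swap_source_target_not_source: "w \<notin> sources G"
  using head_not_source[OF swap_source_edge] .

lemma swap_source_neq: "s \<noteq> w"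
  using s swap_source_target_not_source by auto

lemma sources_swap_source: "sources (swap_source G s w) = insert w (sources G - {s})"
  using s swap_source_neq unfolding swap_source_def sources_reroute by auto

lemma Out_nb_swap_source:
  "Out_nb (swap_source G s w) x =
     (Out_nb G x - {w}) \<union> (if x \<in> insert w (In_nb G w - {s}) then {s} else {})"
proof -
  have "s \<notin> Out_nb G x" using s In_nb_iff_Out_nb unfolding sources_def by fastforce
  then show ?thesis
    using swap_source_neq unfolding swap_source_def Out_nb_reroute by auto
qed

lemma acyclic_swap_source:
  assumes "acyclic G"
  shows "acyclic (swap_source G s w)"
proof (rule acyclic_by_rank)
  fix x y assume e: "(x, y) \<in> swap_source G s w"
  let ?f = "\<lambda>y. if y = s then Suc (CARD('n)) else num_ancestors G y"
  show "?f x < ?f y"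
  proof (cases "y = s")
    case True
    then have "x \<noteq> s"
      using e s swap_source_neq unfolding swap_source_def reroute_def sources_iff by auto
    then show ?thesis using True num_ancestors_le_card[of G x] by simp
  next
    case False
    then have "(x, y) \<in> G" and "y \<noteq> w" using e unfolding swap_source_def reroute_def by auto
    moreover have "x \<noteq> s" using calculation out_s unfolding Out_nb_def by auto
    ultimately show ?thesis using False num_ancestors_less[OF assms] by simp
  qed
qed

end

lemma is_minimal_repair_graph_swap_source:
  fixes C :: "('f::field ^ 'n::finite) set"
  assumes m: "is_minimal_repair_graph C r G" and s: "s \<in> sources G" and out_s: "Out_nb G s = {w}"
  shows "is_minimal_repair_graph C r (swap_source G s w)"
proof -
  have rep: "is_repair_graph C r G" using m by (rule is_minimal_repair_graph_repair)
  have "s \<in> In_nb G w" using swap_source_edge[OF s out_s] unfolding In_nb_def by simp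
  then have "recovering_set C r w (In_nb G w)"
    using rep unfolding is_repair_graph_def by auto
  then have "recovering_set C r s (insert w (In_nb G w - {s}))"
    using \<open>s \<in> In_nb G w\<close> by (rule recovering_set_exchange)
  then have rep': "is_repair_graph C r (swap_source G s w)"
    using rep acyclic_swap_source[OF s out_s is_repair_graph_acyclic[OF rep]]
    unfolding swap_source_def by (intro is_repair_graph_reroute) auto
  have "card (sources (swap_source G s w)) = card (sources G)"
    using s swap_source_target_not_source[OF s out_s]
    unfolding sources_swap_source[OF s out_s]
    by (simp del: card_Diff_insert add: card_Suc_Diff1[OF finite])
  then show ?thesis using m rep' unfolding is_minimal_repair_graph_def by auto
qed

definition exits :: "('n \<times> 'n) set \<Rightarrow> 'n set \<Rightarrow> 'n set" where
  "exits G D = {p \<in> D. \<not> Out_nb G p \<subseteq> D}"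

definition almost_closed :: "('n \<times> 'n) set \<Rightarrow> 'n \<Rightarrow> 'n set \<Rightarrow> bool" where
  "almost_closed G v D \<longleftrightarrow>
     (\<forall>p \<in> exits G D. p \<noteq> v \<and> (\<exists>s \<in> sources G - D. Out_nb G s = {p}))"

context
  fixes G :: "('n::finite \<times> 'n) set" and D :: "'n set" and p s :: 'n
  assumes p: "p \<in> exits G D" and s: "s \<in> sources G - D" and out_s: "Out_nb G s = {p}"
begin

lemma exits_swap_source: "exits (swap_source G s p) (insert s (D - {p})) \<subseteq> exits G D - {p}"
proof -
  have s_src: "s \<in> sources G" using s by simp
  note out_swap = Out_nb_swap_source[OF s_src out_s]
  have "s \<noteq> p" using swap_source_neq[OF s_src out_s] .
  then have "Out_nb (swap_source G s p) s = {}" using out_swap out_s by auto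
  moreover have "Out_nb (swap_source G s p) q \<subseteq> insert s (D - {p})" if "Out_nb G q \<subseteq> D" for q
    using that out_swap by auto
  ultimately show ?thesis unfolding exits_def by auto
qed

lemma almost_closed_swap_source:
  assumes "almost_closed G v D"
  shows "almost_closed (swap_source G s p) v (insert s (D - {p}))"
  unfolding almost_closed_def
proof
  have s_src: "s \<in> sources G" using s by simp
  fix q assume "q \<in> exits (swap_source G s p) (insert s (D - {p}))"
  then have q: "q \<in> exits G D" "q \<noteq> p" using exits_swap_source by auto
  then obtain s' where s': "s' \<in> sources G - D" "Out_nb G s' = {q}" "q \<noteq> v"
    using assms unfolding almost_closed_def by blast
  have "s' \<noteq> s" using s' out_s q(2) by auto
  moreover have "s' \<noteq> p" using s' swap_source_target_not_source[OF s_src out_s] by auto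
  moreover have "s' \<notin> In_nb G p" using s' q(2) In_nb_iff_Out_nb by fastforce
  ultimately have "Out_nb (swap_source G s p) s' = {q}" "s' \<in> sources (swap_source G s p)"
    using s' q(2) Out_nb_swap_source[OF s_src out_s] sources_swap_source[OF s_src out_s]
    by auto
  moreover have "s' \<notin> insert s (D - {p})" using s' \<open>s' \<noteq> s\<close> by auto
  ultimately show "q \<noteq> v \<and> (\<exists>s''\<in>sources (swap_source G s p) - insert s (D - {p}).
      Out_nb (swap_source G s p) s'' = {q})" using s'(3) by blast
qed

end

text \<open>Each exit of an almost closed set is swapped with its pendant source, which enters
  the set as a vertex without out-neighbours; once no exits remain the set is closed.\<close>

lemma small_almost_closed_set_contains_no_source:
  fixes C :: "('f::field ^ 'n::finite) set"
  assumes slrc: "is_SLRC C k r t"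
    and "is_minimal_repair_graph C r G" "card D \<le> t" "almost_closed G v D" "v \<in> D"
  shows "v \<notin> sources G"
  using assms(2-)
proof (induction "card (exits G D)" arbitrary: G D rule: less_induct)
  case less
  show ?case
  proof (cases "exits G D = {}")
    case True
    then show ?thesis
      using small_closed_set_contains_no_source[OF slrc less.prems(1,2)] less.prems(4)
      unfolding exits_def by blast
  next
    case False
    then obtain p where p: "p \<in> exits G D" by blast
    then obtain s where s: "s \<in> sources G - D" "Out_nb G s = {p}" "p \<noteq> v"
      using less.prems(3) unfolding almost_closed_def by blast
    let ?G = "swap_source G s p" and ?D = "insert s (D - {p})"
    have "card (exits ?G ?D) < card (exits G D)"
      using exits_swap_source[OF p s(1,2)] p by (intro psubset_card_mono) auto
    moreover have "card ?D \<le> t"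
    proof -
      have "card ?D \<le> Suc (card (D - {p}))" by (simp add: card_insert_if)
      also have "\<dots> = card D" using p card_Suc_Diff1[OF finite, of p D] unfolding exits_def by simp
      finally show ?thesis using less.prems(2) by simp
    qed
    ultimately have "v \<notin> sources ?G"
      using less.hyps is_minimal_repair_graph_swap_source[OF less.prems(1) _ s(2)] s(1)
        almost_closed_swap_source[OF p s(1,2) less.prems(3)] less.prems(4) s(3) by blast
    moreover have "s \<in> sources G" using s(1) by simp
    ultimately show ?thesis using sources_swap_source[OF _ s(2)] s less.prems(4) by auto
  qed
qed

lemma single_out_nb_source_unique:
  fixes C :: "('f::field ^ 'n::finite) set"
  assumes slrc: "is_SLRC C k r t" and "2 \<le> t" and m: "is_minimal_repair_graph C r G"
    and v1: "v1 \<in> sources G" "Out_nb G v1 = {x}"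
    and v2: "v2 \<in> sources G" "Out_nb G v2 = {x}"
  shows "v1 = v2"
proof (rule ccontr)
  assume "v1 \<noteq> v2"
  have "(v1, x) \<in> G" using v1(2) unfolding Out_nb_def by auto
  then have "x \<notin> sources G" by (rule head_not_source)
  have "exits G {v2, x} \<subseteq> {x}" using v2(2) unfolding exits_def by auto
  then have "almost_closed G v2 {v2, x}"
    using v1 v2(1) \<open>v1 \<noteq> v2\<close> \<open>x \<notin> sources G\<close> unfolding almost_closed_def by blast
  moreover have "card {v2, x} \<le> t" using \<open>2 \<le> t\<close> card_insert_le_m1[of 2 "{x}" v2] by simp
  ultimately show False
    using small_almost_closed_set_contains_no_source[OF slrc m] v2(1) by blast
qed

lemma green_edge_tail_pendant: "green_edge G e \<Longrightarrow> \<exists>s\<in>sources G. Out_nb G s = {fst e}"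
  unfolding green_edge_def C1_set_def C2_set_def by auto

text \<open>Without blue edges, every out-edge leaving \<open>{v} \<union> Out v\<close> (for \<open>v \<in> B\<close>) or
  \<open>{v} \<union> Out v \<union> Out\<^sup>2 v\<close> (for \<open>v \<in> C\<^sub>1\<close>) would be green, making this set almost closed.\<close>

lemma B_set_has_blue_edge:
  fixes C :: "('f::field ^ 'n::finite) set"
  assumes slrc: "is_SLRC C k r t" and "3 \<le> t" and m: "is_minimal_repair_graph C r G"
    and v: "v \<in> B_set G"
  shows "\<exists>e. blue_edge_of G v e"
proof (rule ccontr)
  assume no_blue: "\<nexists>e. blue_edge_of G v e"
  have v_src: "v \<in> sources G" and card_out_v: "card (Out_nb G v) = 2"
    using v unfolding B_set_def by simp_all
  then obtain a b where "a \<noteq> b" and out_v: "Out_nb G v = {a, b}"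
    using card_2_iff[of "Out_nb G v"] by blast
  have va: "(v, a) \<in> G" and vb: "(v, b) \<in> G" using out_v unfolding Out_nb_def by auto
  have ab: "a \<notin> sources G" "b \<notin> sources G"
    using head_not_source[OF va] head_not_source[OF vb] .
  have "almost_closed G v {v, a, b}"
    unfolding almost_closed_def
  proof
    fix p assume p: "p \<in> exits G {v, a, b}"
    then have "p \<in> Out_nb G v" using out_v unfolding exits_def by auto
    obtain q where "(p, q) \<in> G" using p unfolding exits_def Out_nb_def by auto
    then have "green_edge G (p, q)"
      using no_blue v \<open>p \<in> Out_nb G v\<close> unfolding blue_edge_of_def by auto
    then obtain s where s: "s \<in> sources G" "Out_nb G s = {p}"
      using green_edge_tail_pendant by fastforce
    have "s \<noteq> v" using s(2) card_out_v by auto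
    moreover have "s \<noteq> a" "s \<noteq> b" "p \<noteq> v" using s(1) ab v_src \<open>p \<in> Out_nb G v\<close> out_v by auto
    ultimately show "p \<noteq> v \<and> (\<exists>s \<in> sources G - {v, a, b}. Out_nb G s = {p})"
      using s by blast
  qed
  moreover have "card {v, a, b} \<le> t" using \<open>3 \<le> t\<close> card_insert_le_m1[of 3 "{a, b}" v]
    by (simp add: card_insert_if)
  ultimately show False
    using small_almost_closed_set_contains_no_source[OF slrc m] v_src by blast
qed

lemma C1_set_has_blue_edge:
  fixes C :: "('f::field ^ 'n::finite) set"
  assumes slrc: "is_SLRC C k r t" and "3 \<le> t" and m: "is_minimal_repair_graph C r G"
    and v: "v \<in> C1_set G"
  shows "\<exists>e. blue_edge_of G v e"
proof (rule ccontr)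
  assume no_blue: "\<nexists>e. blue_edge_of G v e"
  have ac: "acyclic G"
    using m is_minimal_repair_graph_repair is_repair_graph_acyclic by blast
  have v_src: "v \<in> sources G" using v unfolding C1_set_def by simp
  obtain x where out_v: "Out_nb G v = {x}"
    using v unfolding C1_set_def by (auto simp: card_1_singleton_iff)
  have "Out2_nb G v = Out_nb G x"
    using ac unfolding Out2_nb_def out_v by (auto simp: Out_nb_def acyclic_def)
  then obtain u where out_x: "Out_nb G x = {u}" and out2_v: "Out2_nb G v = {u}"
    using v unfolding C1_set_def by (auto simp: card_1_singleton_iff)
  have vx: "(v, x) \<in> G" and xu: "(x, u) \<in> G"
    using out_v out_x unfolding Out_nb_def by auto
  have not_src: "x \<notin> sources G" "u \<notin> sources G"
    using head_not_source[OF vx] head_not_source[OF xu] .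
  have "x \<noteq> u" using ac xu unfolding acyclic_def by auto
  have "almost_closed G v {v, x, u}"
    unfolding almost_closed_def
  proof
    fix p assume p: "p \<in> exits G {v, x, u}"
    then have "p = u" using out_v out_x unfolding exits_def by auto
    obtain q where "(p, q) \<in> G" using p unfolding exits_def Out_nb_def by auto
    then have "green_edge G (p, q)"
      using no_blue v out2_v \<open>p = u\<close> unfolding blue_edge_of_def by auto
    then obtain s where s: "s \<in> sources G" "Out_nb G s = {p}"
      using green_edge_tail_pendant by fastforce
    have "s \<noteq> v" using s(2) out_v \<open>x \<noteq> u\<close> \<open>p = u\<close> by auto
    moreover have "s \<noteq> x" "s \<noteq> u" "p \<noteq> v" using s(1) not_src v_src \<open>p = u\<close> by auto
    ultimately show "p \<noteq> v \<and> (\<exists>s \<in> sources G - {v, x, u}. Out_nb G s = {p})"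
      using s by blast
  qed
  moreover have "card {v, x, u} \<le> t" using \<open>3 \<le> t\<close> card_insert_le_m1[of 3 "{x, u}" v]
    by (simp add: card_insert_if)
  ultimately show False
    using small_almost_closed_set_contains_no_source[OF slrc m] v_src by blast
qed

lemma B_C1_disjoint: "B_set G \<inter> C1_set G = {}"
  unfolding B_set_def C1_set_def by auto

definition blue_witness :: "('n \<times> 'n) set \<Rightarrow> 'n \<Rightarrow> 'n" where
  "blue_witness G v = (if v \<in> B_set G then v else the_elem (Out_nb G v))"

lemma blue_witness_in_In_nb:
  assumes "blue_edge_of G v e"
  shows "blue_witness G v \<in> In_nb G (fst e)"
proof (cases "v \<in> B_set G")
  case True
  then show ?thesis
    using assms B_C1_disjoint[of G]
    by (auto simp: blue_edge_of_def blue_witness_def In_nb_iff_Out_nb)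
next
  case False
  then have "v \<in> C1_set G" and "fst e \<in> Out2_nb G v"
    using assms unfolding blue_edge_of_def by auto
  moreover obtain x where "Out_nb G v = {x}"
    using \<open>v \<in> C1_set G\<close> unfolding C1_set_def by (auto simp: card_1_singleton_iff)
  ultimately show ?thesis
    using False unfolding blue_witness_def Out2_nb_def by (simp add: In_nb_iff_Out_nb)
qed

lemma inj_on_blue_witness:
  fixes C :: "('f::field ^ 'n::finite) set"
  assumes slrc: "is_SLRC C k r t" and "2 \<le> t" and m: "is_minimal_repair_graph C r G"
  shows "inj_on (blue_witness G) (B_set G \<union> C1_set G)"
proof -
  have B: "blue_witness G v = v" "v \<in> sources G" if "v \<in> B_set G" for v
    using that unfolding blue_witness_def B_set_def by simp_all
  have C1: "\<exists>x. Out_nb G v = {x} \<and> blue_witness G v = x \<and> v \<in> sources G \<and> x \<notin> sources G"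
    if v: "v \<in> C1_set G" for v
  proof -
    obtain x where x: "Out_nb G v = {x}"
      using v unfolding C1_set_def by (auto simp: card_1_singleton_iff)
    then have "(v, x) \<in> G" unfolding Out_nb_def by auto
    then have "x \<notin> sources G" by (rule head_not_source)
    moreover have "v \<notin> B_set G" and "v \<in> sources G"
      using v unfolding B_set_def C1_set_def by auto
    ultimately show ?thesis using x unfolding blue_witness_def by simp
  qed
  show ?thesis
  proof (rule inj_onI)
    fix v1 v2
    assume v1: "v1 \<in> B_set G \<union> C1_set G" and v2: "v2 \<in> B_set G \<union> C1_set G"
      and eq: "blue_witness G v1 = blue_witness G v2"
    consider "v1 \<in> B_set G" "v2 \<in> B_set G" | "v1 \<in> C1_set G" "v2 \<in> C1_set G"
      | "v1 \<in> B_set G" "v2 \<in> C1_set G" | "v1 \<in> C1_set G" "v2 \<in> B_set G"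
      using v1 v2 by blast
    then show "v1 = v2"
    proof cases
      case 1
      then show ?thesis using eq B by simp
    next
      case 2
      obtain x1 where x1: "Out_nb G v1 = {x1}" "blue_witness G v1 = x1" "v1 \<in> sources G"
        using C1[OF 2(1)] by blast
      obtain x2 where x2: "Out_nb G v2 = {x2}" "blue_witness G v2 = x2" "v2 \<in> sources G"
        using C1[OF 2(2)] by blast
      have "Out_nb G v2 = {x1}" using x1(2) x2(1,2) eq by simp
      then show ?thesis
        by (rule single_out_nb_source_unique[OF slrc \<open>2 \<le> t\<close> m x1(3,1) x2(3)])
    next
      case 3
      then show ?thesis using eq B[OF 3(1)] C1[OF 3(2)] by auto
    next
      case 4
      then show ?thesis using eq B[OF 4(2)] C1[OF 4(1)] by auto
    qed
  qed
qed

lemma card_blue_owners_le: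
  fixes C :: "('f::field ^ 'n::finite) set"
  assumes slrc: "is_SLRC C k r t" and "2 \<le> t" and m: "is_minimal_repair_graph C r G"
  shows "card {v. blue_edge_of G v e} \<le> r"
proof (cases "{v. blue_edge_of G v e} = {}")
  case False
  let ?O = "{v. blue_edge_of G v e}"
  have "?O \<subseteq> B_set G \<union> C1_set G" unfolding blue_edge_of_def by blast
  with inj_on_blue_witness[OF assms] have "inj_on (blue_witness G) ?O" by (rule inj_on_subset)
  then have "card ?O = card (blue_witness G ` ?O)" by (rule card_image[symmetric])
  also have "\<dots> \<le> card (In_nb G (fst e))"
    by (intro card_mono finite image_subsetI) (simp add: blue_witness_in_In_nb)
  also have "\<dots> \<le> r"
  proof -
    obtain v where "blue_edge_of G v e" using False by blast
    then have "blue_witness G v \<in> In_nb G (fst e)" by (rule blue_witness_in_In_nb)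
    then have "recovering_set C r (fst e) (In_nb G (fst e))"
      using is_minimal_repair_graph_repair[OF m] unfolding is_repair_graph_def by auto
    then show ?thesis unfolding recovering_set_def by simp
  qed
  finally show ?thesis .
qed simp

theorem lemma6:
  fixes C :: "('f::field ^ 'n::finite) set" and k r :: nat and G :: "('n \<times> 'n) set"
  assumes "finite (UNIV :: 'f set)"
    and "is_SLRC C k r 3"
    and "is_minimal_repair_graph C r G"
  shows "real (card (blue_edges G)) \<ge> (real (card (B_set G)) + real (card (C1_set G))) / real r"
proof -
  note slrc = assms(2) and m = assms(3)
  have "\<exists>e. blue_edge_of G v e" if "v \<in> B_set G \<union> C1_set G" for v
    using that B_set_has_blue_edge[OF slrc order.refl m] C1_set_has_blue_edge[OF slrc order.refl m]
    by blast
  then have cover: "B_set G \<union> C1_set G \<subseteq> (\<Union>e\<in>blue_edges G. {v. blue_edge_of G v e})"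
    unfolding blue_edges_def blue_edge_of_def by blast
  have "card (B_set G) + card (C1_set G) = card (B_set G \<union> C1_set G)"
    using B_C1_disjoint[of G] by (simp add: card_Un_disjoint)
  also have "\<dots> \<le> card (\<Union>e\<in>blue_edges G. {v. blue_edge_of G v e})"
    using cover by (intro card_mono) simp_all
  also have "\<dots> \<le> (\<Sum>e\<in>blue_edges G. card {v. blue_edge_of G v e})"
    by (rule card_UN_le) simp
  also have "\<dots> \<le> (\<Sum>e\<in>blue_edges G. r)"
    using card_blue_owners_le[OF slrc _ m] by (intro sum_mono) simp
  finally have "card (B_set G) + card (C1_set G) \<le> card (blue_edges G) * r" by simp
  then have "real (card (B_set G) + card (C1_set G)) \<le> real (card (blue_edges G) * r)"
    by (simp only: of_nat_le_iff)
  then show ?thesis by (cases "r = 0") (simp_all add: divide_le_eq)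
qed

end
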